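(* For every $n \in \mathbb{N}$, \[ g(n) \le \tau_3(n) \le \tfrac{9}{2}\, g(n). \]
   Context: A colouring of $E(K_n)$ is almost Gallai (almost $3$-Gallai) if no two rainbow triangles share an edge, where a triangle is rainbow if its three edges have pairwise distinct colours. $\tau_3(n)$ is the maximum number of rainbow triangles in an almost Gallai colouring $c: E(K_n) \to \mathbb{N}$ (any number of colours), and $g(n)$ is the maximum number of rainbow triangles in an almost Gallai colouring $c : E(K_n) \to \{R,B,G\}$ using at most three colours. *)

theory Defs
  imports Main
begin

text \<open>Vertices of K_n are 0..n-1. An edge colouring assigns a colour to each
  2-element set {x,y}; its value on other sets is irrelevant.\<close>

datatype rgb = R | B | G

definition triangles :: "nat \<Rightarrow> nat set set" where
  "triangles n = {T. T \<subseteq> {..<n} \<and> card T = 3}"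

definition rainbow :: "(nat set \<Rightarrow> 'c) \<Rightarrow> nat set \<Rightarrow> bool" where
  "rainbow c T \<longleftrightarrow> (\<exists>x y z. T = {x, y, z} \<and> x \<noteq> y \<and> y \<noteq> z \<and> x \<noteq> z \<and>
      c {x, y} \<noteq> c {y, z} \<and> c {x, y} \<noteq> c {x, z} \<and> c {y, z} \<noteq> c {x, z})"

definition rainbow_triangles :: "nat \<Rightarrow> (nat set \<Rightarrow> 'c) \<Rightarrow> nat set set" where
  "rainbow_triangles n c = {T \<in> triangles n. rainbow c T}"

definition almost_gallai :: "nat \<Rightarrow> (nat set \<Rightarrow> 'c) \<Rightarrow> bool" where
  "almost_gallai n c \<longleftrightarrow> (\<forall>T1 \<in> rainbow_triangles n c. \<forall>T2 \<in> rainbow_triangles n c.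
      T1 \<noteq> T2 \<longrightarrow> \<not> (\<exists>x y. x \<noteq> y \<and> {x, y} \<subseteq> T1 \<and> {x, y} \<subseteq> T2))"

text \<open>tau_3(n): maximum over colourings with colours in \<nat> (any number of colours).\<close>
definition tau3 :: "nat \<Rightarrow> nat" where
  "tau3 n = Max {card (rainbow_triangles n c) | c :: nat set \<Rightarrow> nat. almost_gallai n c}"

definition g :: "nat \<Rightarrow> nat" where
  "g n = Max {card (rainbow_triangles n c) | c :: nat set \<Rightarrow> rgb. almost_gallai n c}"

end

theory Submission
  imports Defs "HOL-Library.FuncSet"
begin

text \<open>Composing a colouring c with a recolouring f of its colours can only destroy
  rainbow triangles, so almost Gallai colourings stay almost Gallai; an injective
  recolouring destroys none, which gives g(n) \<le> tau_3(n). Conversely, recolour the set C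
  of colours used by an optimal c with R, B, G uniformly at random. A rainbow triangle of
  c survives exactly when its three edge colours get distinct images, which happens for
  3!/3^3 = 2/9 of the 3^|C| recolourings. Double counting the pairs (recolouring,
  surviving triangle) then shows that some recolouring keeps at least 2/9 tau_3(n)
  rainbow triangles.\<close>

lemma UNIV_rgb: "UNIV = {R, B, G}"
  using rgb.exhaust by auto

instance rgb :: finite
  by standard (simp add: UNIV_rgb)

lemma card_UNIV_rgb: "card (UNIV :: rgb set) = 3"
  by (simp add: UNIV_rgb)

lemma card_distinct_rgb_triples:
  "card ({(u, v, w). u \<noteq> v \<and> v \<noteq> w \<and> u \<noteq> w} :: (rgb \<times> rgb \<times> rgb) set) = 6"
proof -
  have "({(u, v, w). u \<noteq> v \<and> v \<noteq> w \<and> u \<noteq> w} :: (rgb \<times> rgb \<times> rgb) set)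
      = {(R,B,G), (R,G,B), (B,R,G), (B,G,R), (G,R,B), (G,B,R)}" (is "?D = ?E")
  proof (rule set_eqI)
    fix t :: "rgb \<times> rgb \<times> rgb"
    obtain u v w where "t = (u, v, w)"
      by (cases t)
    then show "t \<in> ?D \<longleftrightarrow> t \<in> ?E"
      by (cases u; cases v; cases w) simp_all
  qed
  then show ?thesis
    by simp
qed

lemma card_PiE_filter_restrict:
  assumes "finite C" "S \<subseteq> C"
  shows "card {f \<in> C \<rightarrow>\<^sub>E A. P (restrict f S)}
    = card {h \<in> S \<rightarrow>\<^sub>E A. P h} * card A ^ card (C - S)"
proof -
  let ?F = "{f \<in> C \<rightarrow>\<^sub>E A. P (restrict f S)}"
  let ?H = "{h \<in> S \<rightarrow>\<^sub>E A. P h} \<times> ((C - S) \<rightarrow>\<^sub>E A)"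
  let ?split = "\<lambda>f. (restrict f S, restrict f (C - S))"
  let ?merge = "\<lambda>(h, k) x. if x \<in> S then h x else k x"
  have "bij_betw ?split ?F ?H"
  proof (rule bij_betw_byWitness[where f' = ?merge])
    show "\<forall>f \<in> ?F. ?merge (?split f) = f"
      using assms(2) by (auto simp: PiE_def extensional_def fun_eq_iff)
    show "\<forall>hk \<in> ?H. ?split (?merge hk) = hk"
      by (auto simp: PiE_def extensional_def fun_eq_iff)
    show "?split ` ?F \<subseteq> ?H"
      using assms(2) by auto
    have "?merge (h, k) \<in> C \<rightarrow>\<^sub>E A" "restrict (?merge (h, k)) S = h"
      if "h \<in> S \<rightarrow>\<^sub>E A" "k \<in> (C - S) \<rightarrow>\<^sub>E A" for h k
      using that assms(2) by (auto simp: PiE_def extensional_def fun_eq_iff)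
    then show "?merge ` ?H \<subseteq> ?F"
      by auto
  qed
  then show ?thesis
    using assms by (simp add: bij_betw_same_card card_cartesian_product card_PiE)
qed

lemma card_PiE_rgb_inj_on_self:
  assumes "card S = 3"
  shows "card {h \<in> S \<rightarrow>\<^sub>E (UNIV :: rgb set). inj_on h S} = 6"
proof -
  obtain p q r where S: "S = {p, q, r}" and pqr: "p \<noteq> q" "q \<noteq> r" "p \<noteq> r"
    using assms card_3_iff by metis
  let ?H = "{h \<in> S \<rightarrow>\<^sub>E (UNIV :: rgb set). inj_on h S}"
  let ?D = "{(u, v, w). u \<noteq> v \<and> v \<noteq> w \<and> u \<noteq> w} :: (rgb \<times> rgb \<times> rgb) set"
  let ?values = "\<lambda>h. (h p, h q, h r)"
  let ?extend = "\<lambda>(u, v, w) x.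
    if x = p then u else if x = q then v else if x = r then w else undefined"
  have "bij_betw ?values ?H ?D"
  proof (rule bij_betw_byWitness[where f' = ?extend])
    show "\<forall>h \<in> ?H. ?extend (?values h) = h"
    proof
      fix h
      assume "h \<in> ?H"
      then have "x \<notin> S \<Longrightarrow> h x = undefined" for x
        by (simp add: PiE_def extensional_def)
      then show "?extend (?values h) = h"
        by (auto simp: S fun_eq_iff)
    qed
    show "\<forall>t \<in> ?D. ?values (?extend t) = t"
      using pqr by auto
    show "?values ` ?H \<subseteq> ?D"
      using pqr by (auto simp: S)
    show "?extend ` ?D \<subseteq> ?H"
      using pqr by (auto simp: S PiE_def extensional_def)
  qed
  then show ?thesis
    by (simp add: bij_betw_same_card card_distinct_rgb_triples)
qed

lemma card_PiE_rgb_inj_on: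
  assumes "finite C" "S \<subseteq> C" "card S = 3"
  shows "27 * card {f \<in> C \<rightarrow>\<^sub>E (UNIV :: rgb set). inj_on f S} = 6 * 3 ^ card C"
proof -
  have "card C = card (C - S) + 3"
    using assms card_mono[OF assms(1,2)] by (simp add: card_Diff_subset finite_subset)
  moreover have "card {f \<in> C \<rightarrow>\<^sub>E (UNIV :: rgb set). inj_on f S} = 6 * 3 ^ card (C - S)"
    using card_PiE_filter_restrict[OF assms(1,2), of "UNIV :: rgb set" "\<lambda>h. inj_on h S"]
    by (simp add: card_PiE_rgb_inj_on_self[OF assms(3)] card_UNIV_rgb)
  ultimately show ?thesis
    by (simp add: power_add)
qed

lemma sum_card_filter_swap:
  assumes "finite X" "finite Y"
  shows "(\<Sum>x\<in>X. card {y \<in> Y. P x y}) = (\<Sum>y\<in>Y. card {x \<in> X. P x y})"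
  using sum.swap_restrict[OF assms, of "\<lambda>_ _. 1 :: nat" P] by simp

lemma rainbow_compD: "rainbow (f \<circ> c) T \<Longrightarrow> rainbow c T"
  unfolding rainbow_def comp_def by metis

lemma rainbow_comp_inj: "inj f \<Longrightarrow> rainbow (f \<circ> c) T \<longleftrightarrow> rainbow c T"
  by (simp add: rainbow_def inj_eq)

lemma rainbow_triangles_comp_subset: "rainbow_triangles n (f \<circ> c) \<subseteq> rainbow_triangles n c"
  by (auto simp: rainbow_triangles_def intro: rainbow_compD)

lemma rainbow_triangles_comp_inj: "inj f \<Longrightarrow> rainbow_triangles n (f \<circ> c) = rainbow_triangles n c"
  by (simp add: rainbow_triangles_def rainbow_comp_inj)

lemma almost_gallai_comp: "almost_gallai n c \<Longrightarrow> almost_gallai n (f \<circ> c)"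
  unfolding almost_gallai_def using rainbow_triangles_comp_subset[of n f c] by (meson subsetD)

lemma rainbow_edge_colours:
  fixes c :: "nat set \<Rightarrow> 'a"
  assumes "rainbow c T"
  obtains S where "card S = 3" "S \<subseteq> c ` Pow T"
    "\<And>f :: 'a \<Rightarrow> 'b. inj_on f S \<Longrightarrow> rainbow (f \<circ> c) T"
proof -
  obtain x y z where T: "T = {x, y, z}" "x \<noteq> y" "y \<noteq> z" "x \<noteq> z"
    and distinct: "c {x, y} \<noteq> c {y, z}" "c {x, y} \<noteq> c {x, z}" "c {y, z} \<noteq> c {x, z}"
    using assms unfolding rainbow_def by blast
  let ?S = "{c {x, y}, c {y, z}, c {x, z}}"
  have "card ?S = 3"
    using distinct by simp
  moreover have "?S \<subseteq> c ` Pow T"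
    using T by auto
  moreover have "rainbow (f \<circ> c) T" if "inj_on f ?S" for f :: "'a \<Rightarrow> 'b"
  proof -
    have "f (c {x, y}) \<noteq> f (c {y, z})" "f (c {x, y}) \<noteq> f (c {x, z})" "f (c {y, z}) \<noteq> f (c {x, z})"
      using distinct that by (auto dest: inj_onD)
    then show ?thesis
      unfolding rainbow_def using T by (intro exI[of _ x] exI[of _ y] exI[of _ z]) simp
  qed
  ultimately show ?thesis
    by (rule that)
qed

lemma finite_triangles: "finite (triangles n)"
  by (rule finite_subset[of _ "Pow {..<n}"]) (auto simp: triangles_def)

lemma finite_rainbow_triangles: "finite (rainbow_triangles n c)"
  by (rule finite_subset[OF _ finite_triangles]) (auto simp: rainbow_triangles_def)

lemma almost_gallai_const: "almost_gallai n (\<lambda>_. a)"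
  by (simp add: almost_gallai_def rainbow_triangles_def rainbow_def)

lemma finite_rainbow_triangle_counts: "finite {card (rainbow_triangles n c) | c. P c}"
proof (rule finite_subset)
  have "card (rainbow_triangles n c) \<le> card (triangles n)" for c :: "nat set \<Rightarrow> 'c"
    by (rule card_mono[OF finite_triangles]) (auto simp: rainbow_triangles_def)
  then show "{card (rainbow_triangles n c) | c. P c} \<subseteq> {..card (triangles n)}"
    by auto
qed simp

lemma card_rainbow_triangles_le_Max:
  fixes c :: "nat set \<Rightarrow> 'c"
  assumes "almost_gallai n c"
  shows "card (rainbow_triangles n c)
    \<le> Max {card (rainbow_triangles n c') | c' :: nat set \<Rightarrow> 'c. almost_gallai n c'}"
  using assms by (intro Max_ge[OF finite_rainbow_triangle_counts]) blast

lemma Max_rainbow_triangles_attained: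
  obtains c :: "nat set \<Rightarrow> 'c" where "almost_gallai n c"
    "Max {card (rainbow_triangles n c') | c' :: nat set \<Rightarrow> 'c. almost_gallai n c'}
      = card (rainbow_triangles n c)"
proof -
  let ?counts = "{card (rainbow_triangles n c') | c' :: nat set \<Rightarrow> 'c. almost_gallai n c'}"
  have "?counts \<noteq> {}"
    using almost_gallai_const[of n "undefined :: 'c"] by blast
  then have "Max ?counts \<in> ?counts"
    by (rule Max_in[OF finite_rainbow_triangle_counts])
  then obtain c :: "nat set \<Rightarrow> 'c"
    where "almost_gallai n c" "Max ?counts = card (rainbow_triangles n c)"
    by blast
  then show ?thesis
    by (rule that)
qed

lemma g_le_tau3: "g n \<le> tau3 n"
proof -
  obtain c :: "nat set \<Rightarrow> rgb" where c: "almost_gallai n c" "g n = card (rainbow_triangles n c)"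
    unfolding g_def by (rule Max_rainbow_triangles_attained)
  define \<iota> :: "rgb \<Rightarrow> nat" where "\<iota> x = (case x of R \<Rightarrow> 0 | B \<Rightarrow> 1 | G \<Rightarrow> 2)" for x
  have "inj \<iota>"
    by (auto simp: inj_def \<iota>_def split: rgb.splits)
  then have "rainbow_triangles n (\<iota> \<circ> c) = rainbow_triangles n c"
    by (rule rainbow_triangles_comp_inj)
  moreover have "card (rainbow_triangles n (\<iota> \<circ> c)) \<le> tau3 n"
    unfolding tau3_def by (intro card_rainbow_triangles_le_Max almost_gallai_comp c(1))
  ultimately show ?thesis
    using c(2) by simp
qed

lemma card_recolourings_keeping_rainbow:
  fixes c :: "nat set \<Rightarrow> 'c"
  assumes "T \<in> rainbow_triangles n c" "finite C" "c ` Pow T \<subseteq> C"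
  shows "6 * 3 ^ card C
    \<le> 27 * card {f \<in> C \<rightarrow>\<^sub>E (UNIV :: rgb set). T \<in> rainbow_triangles n (f \<circ> c)}"
proof -
  from assms(1) have "T \<in> triangles n" "rainbow c T"
    by (simp_all add: rainbow_triangles_def)
  obtain S where "card S = 3" "S \<subseteq> c ` Pow T"
    and survives: "\<And>f :: 'c \<Rightarrow> rgb. inj_on f S \<Longrightarrow> rainbow (f \<circ> c) T"
    using rainbow_edge_colours[OF \<open>rainbow c T\<close>, where 'b = rgb] by metis
  with assms(3) have "S \<subseteq> C"
    by blast
  have "6 * 3 ^ card C = 27 * card {f \<in> C \<rightarrow>\<^sub>E (UNIV :: rgb set). inj_on f S}"
    using card_PiE_rgb_inj_on[OF \<open>finite C\<close> \<open>S \<subseteq> C\<close> \<open>card S = 3\<close>] by simp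
  also have "\<dots> \<le> 27 * card {f \<in> C \<rightarrow>\<^sub>E (UNIV :: rgb set). T \<in> rainbow_triangles n (f \<circ> c)}"
    using \<open>finite C\<close> \<open>T \<in> triangles n\<close> survives
    by (auto simp: rainbow_triangles_def finite_PiE intro!: card_mono)
  finally show ?thesis .
qed

lemma two_card_rainbow_triangles_le_nine_g:
  fixes c :: "nat set \<Rightarrow> 'c"
  assumes "almost_gallai n c"
  shows "2 * card (rainbow_triangles n c) \<le> 9 * g n"
proof -
  define C where "C = c ` Pow {..<n}"
  define F where "F = C \<rightarrow>\<^sub>E (UNIV :: rgb set)"
  let ?RT = "rainbow_triangles n"
  have "finite C"
    by (simp add: C_def)
  then have "finite F" "card F = 3 ^ card C"
    by (simp_all add: F_def finite_PiE card_PiE card_UNIV_rgb)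
  have survivors: "6 * 3 ^ card C \<le> 27 * card {f \<in> F. T \<in> ?RT (f \<circ> c)}" if "T \<in> ?RT c" for T
  proof -
    from that have "c ` Pow T \<subseteq> C"
      by (auto simp: C_def rainbow_triangles_def triangles_def)
    with that \<open>finite C\<close> show ?thesis
      unfolding F_def by (rule card_recolourings_keeping_rainbow)
  qed
  have surviving_triangles: "{T \<in> ?RT c. T \<in> ?RT (f \<circ> c)} = ?RT (f \<circ> c)" for f :: "'c \<Rightarrow> rgb"
    using rainbow_triangles_comp_subset by blast
  have "3 ^ card C * (6 * card (?RT c)) = (\<Sum>T\<in>?RT c. 6 * 3 ^ card C)"
    by simp
  also have "\<dots> \<le> (\<Sum>T\<in>?RT c. 27 * card {f \<in> F. T \<in> ?RT (f \<circ> c)})"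
    by (rule sum_mono) (rule survivors)
  also have "\<dots> = 27 * (\<Sum>f\<in>F. card (?RT (f \<circ> c)))"
    by (simp add: sum_distrib_left[symmetric] surviving_triangles
        sum_card_filter_swap[OF finite_rainbow_triangles \<open>finite F\<close>])
  also have "\<dots> \<le> 27 * (\<Sum>f\<in>F. g n)"
    unfolding g_def using assms
    by (intro mult_le_mono2 sum_mono card_rainbow_triangles_le_Max almost_gallai_comp)
  also have "\<dots> = 3 ^ card C * (27 * g n)"
    by (simp add: \<open>card F = 3 ^ card C\<close>)
  finally have "6 * card (?RT c) \<le> 27 * g n"
    by simp
  then show ?thesis
    by linarith
qed

theorem lemma4p1:
  fixes n :: nat
  shows "g n \<le> tau3 n \<and> 2 * tau3 n \<le> 9 * g n"
proof
  show "g n \<le> tau3 n"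
    by (rule g_le_tau3)
  obtain c :: "nat set \<Rightarrow> nat" where "almost_gallai n c" "tau3 n = card (rainbow_triangles n c)"
    unfolding tau3_def by (rule Max_rainbow_triangles_attained)
  then show "2 * tau3 n \<le> 9 * g n"
    using two_card_rainbow_triangles_le_nine_g by simp
qed

end
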